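(* Let $\lambda=(\lambda_1,\dots,\lambda_l)$ be a partition of length $l$, $(w_l,\dots,w_1)=(\lambda_1,\dots,\lambda_l)+(l-1,\dots,1,0)$, and $N'_{\lambda,1}=\sum_{i=2}^l\lambda_i-l+1$. (i) If $m<N'_{\lambda,1}$ then $\partial_1^m s_\lambda([x_1]-[x_2])=0$. (ii) $\partial_1^{N'_{\lambda,1}}s_\lambda([x_1]-[x_2])=c_\lambda\,s_{(\lambda_1,1^{l-1})}([x_1]-[x_2])$, where $c_\lambda=\dfrac{N'_{\lambda,1}!}{\prod_{i=1}^{l-1}(w_i-1)!}\prod_{1\le i<j\le l-1}(w_j-w_i)$. (iii) If $\mu=(\mu_1,\dots,\mu_{l'})$ is a partition of length $l'\ge l$ with $\mu_i=\lambda_i$ for $2\le i\le l$ and $\mu_i=1$ for $i>l$, then $\partial_1^{N'_{\lambda,1}}s_\mu([x_1]-[x_2])=c_\lambda\,s_{(\mu_1,1^{l'-1})}([x_1]-[x_2])$. (iv) For $m,r\ge1$, $s_{(m,1^{r-1})}([x_1]-[x_2])=(-1)^{r-1}x_1^{m-1}x_2^{r-1}(x_1-x_2)$.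
   Context: For $t=(t_1,t_2,\dots)$ define $p_m(t)$ by $\exp(\sum_{m\ge1}t_mk^m)=\sum_{m\ge0}p_m(t)k^m$, $p_m=0$ for $m<0$; $s_\mu(t)=\det(p_{\mu_i-i+j}(t))_{1\le i,j\le l}$ for a partition $\mu=(\mu_1\ge\dots\ge\mu_l)$. $[x]=(x,x^2/2,x^3/3,\dots)$, so $[x_1]-[x_2]$ has components $(x_1^i-x_2^i)/i$. $\partial_1=\partial/\partial t_1$. $(m,1^{r-1})$ denotes the hook partition $(m,1,\dots,1)$ with $r-1$ ones. *)

theory Defs
  imports "HOL-Analysis.Derivative" "HOL-Computational_Algebra.Formal_Power_Series" "Jordan_Normal_Form.Determinant"
begin

text \<open>Times t = (t_1, t_2, ...) are functions nat => real; the value at index 0 is ignored.\<close>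

definition pfun :: "(nat \<Rightarrow> real) \<Rightarrow> nat \<Rightarrow> real" where
  "pfun t m = fps_nth (fps_exp 1 oo Abs_fps (\<lambda>i. if i = 0 then 0 else t i)) m"

definition pint :: "(nat \<Rightarrow> real) \<Rightarrow> int \<Rightarrow> real" where
  "pint t k = (if k < 0 then 0 else pfun t (nat k))"

definition schur :: "nat list \<Rightarrow> (nat \<Rightarrow> real) \<Rightarrow> real" where
  "schur mu t = det (mat (length mu) (length mu)
      (\<lambda>(i, j). pint t (int (mu ! i) - int i + int j)))"

definition is_partition :: "nat list \<Rightarrow> bool" where
  "is_partition mu \<longleftrightarrow> sorted_wrt (\<ge>) mu \<and> (\<forall>x\<in>set mu. 0 < x)"

text \<open>[x1] - [x2]: components (x1^i - x2^i)/i.\<close>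
definition brk :: "real \<Rightarrow> real \<Rightarrow> nat \<Rightarrow> real" where
  "brk x1 x2 = (\<lambda>i. if i = 0 then 0 else (x1 ^ i - x2 ^ i) / real i)"

definition d1 :: "nat \<Rightarrow> ((nat \<Rightarrow> real) \<Rightarrow> real) \<Rightarrow> (nat \<Rightarrow> real) \<Rightarrow> real" where
  "d1 m F t = (deriv ^^ m) (\<lambda>s. F (t(1 := s))) (t 1)"

definition hook :: "nat \<Rightarrow> nat \<Rightarrow> nat list" where
  "hook m r = m # replicate (r - 1) 1"

text \<open>N'_{lambda,1} = sum_{i=2}^l lambda_i - l + 1 (nonnegative for partitions).\<close>
definition Nprime :: "nat list \<Rightarrow> nat" where
  "Nprime lam = (\<Sum>i\<in>{1..<length lam}. lam ! i) - (length lam - 1)"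

text \<open>(w_l,...,w_1) = (lambda_1+l-1, ..., lambda_l), i.e. w_i = lambda_{l+1-i} + i - 1, 1 <= i <= l.\<close>
definition wt :: "nat list \<Rightarrow> nat \<Rightarrow> nat" where
  "wt lam i = lam ! (length lam - i) + i - 1"

definition clam :: "nat list \<Rightarrow> real" where
  "clam lam = fact (Nprime lam) / (\<Prod>i\<in>{1..length lam - 1}. fact (wt lam i - 1))
     * (\<Prod>i\<in>{1..length lam - 1}. \<Prod>j\<in>{i<..length lam - 1}. (real (wt lam j) - real (wt lam i)))"

end

theory Submission
  imports Defs
begin

text \<open>
  Along t = [x1] - [x2] with t_1 shifted by u, the generating function of the p_n is
  exp(u k) (1 - x2 k) / (1 - x1 k). Hence every entry of the Jacobi-Trudi matrix is a
  polynomial in u, and the m-th t_1-derivative of s_lambda is m! times the u^m-coefficient of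
  the determinant. Subtracting x1 times each column from the next turns the generating
  function of all columns but the first into exp(u k) (1 - x2 k), whose n-th coefficient has
  order n - 1 in u. These orders are separable in rows and columns, so the determinant
  vanishes to order N' and its N'-th coefficient is the determinant of the leading
  coefficients: p_(lambda_1) (-x2)^(l-1) det (1 / (lambda_(i+1) - i + j - 1)!). After reversing
  rows and columns, the last matrix is a Vandermonde matrix in the w_i written in the falling
  factorial basis, which yields c_lambda / N'!. Appending parts equal to 1 borders this matrix
  by a unitriangular block, which gives (iii) and, for hooks, the closed form (iv).
\<close>

section \<open>Generating function of the p_n\<close>

lemma fps_deriv_eq_mult_unique:
  fixes f h g :: "'a::{idom,ring_char_0} fps"
  assumes "fps_deriv f = f * g" and "fps_deriv h = h * g" and "fps_nth f 0 = fps_nth h 0"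
  shows "f = h"
proof -
  have "\<forall>k\<le>n. fps_nth f k = fps_nth h k" for n
  proof (induction n)
    case 0
    then show ?case using assms(3) by simp
  next
    case (Suc n)
    have "fps_nth (fps_deriv f) n = fps_nth (fps_deriv h) n"
      unfolding assms(1,2) fps_mult_nth using Suc.IH by (intro sum.cong) auto
    then have "fps_nth f (Suc n) = fps_nth h (Suc n)"
      by (simp del: of_nat_Suc)
    with Suc.IH show ?case using le_Suc_eq by auto
  qed
  then show ?thesis by (auto simp: fps_eq_iff)
qed

lemma fps_deriv_exp_compose:
  fixes G :: "'a::field_char_0 fps"
  assumes "fps_nth G 0 = 0"
  shows "fps_deriv (fps_exp 1 oo G) = (fps_exp 1 oo G) * fps_deriv G"
  using assms by (simp add: fps_compose_deriv)

lemma fps_exp_compose_add_linear: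
  fixes G :: "'a::field_char_0 fps"
  assumes "fps_nth G 0 = 0"
  shows "fps_exp 1 oo (G + fps_const c * fps_X) = fps_exp c * (fps_exp 1 oo G)"
proof (rule fps_deriv_eq_mult_unique)
  show "fps_deriv (fps_exp 1 oo (G + fps_const c * fps_X))
      = (fps_exp 1 oo (G + fps_const c * fps_X)) * fps_deriv (G + fps_const c * fps_X)"
    by (rule fps_deriv_exp_compose) (simp add: assms)
  show "fps_deriv (fps_exp c * (fps_exp 1 oo G))
      = fps_exp c * (fps_exp 1 oo G) * fps_deriv (G + fps_const c * fps_X)"
    using fps_deriv_exp_compose[OF assms] by (simp add: algebra_simps)
qed (simp add: assms)

definition time_fps :: "(nat \<Rightarrow> real) \<Rightarrow> real fps" where
  "time_fps t = Abs_fps (\<lambda>i. if i = 0 then 0 else t i)"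

lemma pfun_time_fps: "pfun t n = fps_nth (fps_exp 1 oo time_fps t) n"
  by (simp add: pfun_def time_fps_def)

lemma pfun_update_1:
  "pfun (t(1 := s)) n = (\<Sum>j\<le>n. (s - t 1) ^ j / fact j * pfun t (n - j))"
proof -
  have "time_fps (t(1 := s)) = time_fps t + fps_const (s - t 1) * fps_X"
    by (auto simp: time_fps_def fps_eq_iff)
  then have "fps_exp 1 oo time_fps (t(1 := s)) = fps_exp (s - t 1) * (fps_exp 1 oo time_fps t)"
    by (simp add: fps_exp_compose_add_linear time_fps_def)
  then show ?thesis
    by (simp add: pfun_time_fps fps_mult_nth atLeast0AtMost)
qed

lemma geometric_fps_mult:
  "Abs_fps (\<lambda>i. a ^ i) * (1 - fps_const a * fps_X) = (1 :: 'a::comm_ring_1 fps)"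
proof -
  have "fps_nth (Abs_fps (\<lambda>i. a ^ i) * (1 - fps_const a * fps_X)) n = fps_nth 1 n" for n
    by (cases n) (auto simp: algebra_simps fps_X_mult_right_nth)
  then show ?thesis by (simp add: fps_eq_iff)
qed

lemma fps_deriv_geometric:
  fixes a :: "'a::comm_ring_1"
  shows "fps_deriv (Abs_fps (\<lambda>i. a ^ i)) = fps_const a * Abs_fps (\<lambda>i. a ^ i) ^ 2"
  (is "fps_deriv ?A = _")
proof -
  have "fps_deriv ?A * (1 - fps_const a * fps_X) = fps_const a * ?A"
    using arg_cong[OF geometric_fps_mult[of a], of fps_deriv] by (simp add: algebra_simps)
  then have "fps_deriv ?A * (1 - fps_const a * fps_X) * ?A = fps_const a * ?A * ?A"
    by simp
  then show ?thesis
    by (simp add: geometric_fps_mult mult.assoc mult.commute[of "1 - _"] power2_eq_square)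
qed

lemma fps_exp_compose_brk:
  "fps_exp 1 oo time_fps (brk x1 x2) = Abs_fps (\<lambda>i. x1 ^ i) * (1 - fps_const x2 * fps_X)"
proof (rule fps_deriv_eq_mult_unique)
  define A where "A a = Abs_fps (\<lambda>i. (a::real) ^ i)" for a
  define B where "B = 1 - fps_const x2 * fps_X"
  have deriv_time: "fps_deriv (time_fps (brk x1 x2)) = fps_const x1 * A x1 - fps_const x2 * A x2"
    by (auto simp: fps_eq_iff time_fps_def brk_def A_def field_simps)
  have geometric_x2: "A x2 * B = 1"
    unfolding A_def B_def by (rule geometric_fps_mult)
  have "A x1 * B * fps_deriv (time_fps (brk x1 x2))
      = fps_const x1 * A x1 ^ 2 * B - fps_const x2 * A x1 * (A x2 * B)"
    unfolding deriv_time by (simp add: algebra_simps power2_eq_square)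
  also have "\<dots> = fps_deriv (A x1 * B)"
    unfolding geometric_x2
    by (simp only: fps_deriv_mult A_def fps_deriv_geometric)
      (simp add: B_def algebra_simps flip: fps_const_neg)
  finally show "fps_deriv (A x1 * B) = A x1 * B * fps_deriv (time_fps (brk x1 x2))" ..
qed (auto simp: time_fps_def fps_deriv_exp_compose)

lemma pfun_brk: "pfun (brk x1 x2) n = (if n = 0 then 1 else x1 ^ (n - 1) * (x1 - x2))"
  by (cases n) (auto simp: pfun_time_fps fps_exp_compose_brk algebra_simps fps_X_mult_right_nth)

section \<open>Schur functions as polynomials in the first time\<close>

definition pint_poly :: "(nat \<Rightarrow> real) \<Rightarrow> int \<Rightarrow> real poly" where
  "pint_poly t n = (\<Sum>j\<le>nat n. monom (pint t (n - int j) / fact j) j)"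

lemma coeff_pint_poly: "coeff (pint_poly t n) k = pint t (n - int k) / fact k"
proof (cases "k \<le> nat n")
  case True
  then show ?thesis by (simp add: pint_poly_def coeff_sum coeff_monom)
next
  case False
  then have "n - int k < 0" by linarith
  with False show ?thesis by (simp add: pint_poly_def coeff_sum coeff_monom pint_def)
qed

lemma poly_pint_poly: "poly (pint_poly t n) (s - t 1) = pint (t(1 := s)) n"
proof (cases "n < 0")
  case True
  then show ?thesis by (simp add: pint_poly_def pint_def)
next
  case False
  have "pint t (n - int j) = pfun t (nat n - j)" if "j \<le> nat n" for j
    using that False by (simp add: pint_def nat_diff_distrib)
  then show ?thesis using False
    by (simp add: pint_poly_def pint_def poly_sum poly_monom pfun_update_1 mult.commute
        del: One_nat_def)
qed

definition schur_poly :: "(nat \<Rightarrow> real) \<Rightarrow> nat list \<Rightarrow> real poly" where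
  "schur_poly t lam = det (mat (length lam) (length lam)
      (\<lambda>(i, j). pint_poly t (int (lam ! i) - int i + int j)))"

lemma poly_schur_poly: "poly (schur_poly t lam) (s - t 1) = schur lam (t(1 := s))"
proof -
  interpret eval: comm_ring_hom "\<lambda>p::real poly. poly p (s - t 1)"
    by unfold_locales (auto simp: poly_mult)
  show ?thesis
    unfolding schur_poly_def schur_def eval.hom_det[symmetric]
    by (intro arg_cong[where f = det] eq_matI) (auto simp: poly_pint_poly simp del: One_nat_def)
qed

lemma schur_eq_coeff_0: "schur lam t = coeff (schur_poly t lam) 0"
  using poly_schur_poly[of t lam "t 1"] by (simp add: poly_0_coeff_0)

lemma higher_deriv_poly_shift:
  "(deriv ^^ m) (\<lambda>s. poly p (s - c)) = (\<lambda>s. poly ((pderiv ^^ m) p) (s - c :: real))"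
proof (induction m)
  case (Suc m)
  have "deriv (\<lambda>s. poly q (s - c)) s = poly (pderiv q) (s - c)" for q s
    by (rule DERIV_imp_deriv) (auto intro!: derivative_eq_intros)
  with Suc show ?case by simp
qed simp

lemma d1_schur: "d1 m (schur lam) t = fact m * coeff (schur_poly t lam) m"
proof -
  have "d1 m (schur lam) t = poly ((pderiv ^^ m) (schur_poly t lam)) 0"
    by (simp add: d1_def poly_schur_poly[symmetric] higher_deriv_poly_shift del: One_nat_def)
  then show ?thesis
    by (simp add: poly_0_coeff_0 coeff_higher_pderiv pochhammer_fact)
qed

section \<open>Lowest-order coefficients of polynomial determinants\<close>

definition vanishes_below :: "'a::zero poly \<Rightarrow> int \<Rightarrow> bool" where
  "vanishes_below p w \<longleftrightarrow> (\<forall>k. int k < w \<longrightarrow> coeff p k = 0)"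

definition coeff_int :: "'a::zero poly \<Rightarrow> int \<Rightarrow> 'a" where
  "coeff_int p k = (if k < 0 then 0 else coeff p (nat k))"

lemma vanishes_below_mult:
  fixes p q :: "'a::comm_semiring_1 poly"
  assumes "vanishes_below p a" and "vanishes_below q b"
  shows "vanishes_below (p * q) (a + b)"
  unfolding vanishes_below_def coeff_mult
proof (intro allI impI sum.neutral ballI)
  fix k i assume "int k < a + b" and "i \<in> {..k}"
  then have "int i < a \<or> int (k - i) < b" by auto
  then show "coeff p i * coeff q (k - i) = 0"
    using assms by (auto simp: vanishes_below_def)
qed

lemma coeff_int_mult_lowest:
  fixes p q :: "'a::comm_semiring_1 poly"
  assumes p: "vanishes_below p a" and q: "vanishes_below q b"
  shows "coeff_int (p * q) (a + b) = coeff_int p a * coeff_int q b"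
proof (cases "a + b < 0")
  case True
  then show ?thesis by (auto simp: coeff_int_def)
next
  case False
  define n where "n = nat (a + b)"
  have "coeff (p * q) n
      = (\<Sum>i\<le>n. if i = nat a \<and> 0 \<le> a then coeff p i * coeff q (n - i) else 0)"
    unfolding coeff_mult
  proof (intro sum.cong refl)
    fix i assume "i \<in> {..n}"
    then have "int i < a \<or> int (n - i) < b \<or> (i = nat a \<and> 0 \<le> a)"
      using False by (auto simp: n_def)
    then show "coeff p i * coeff q (n - i)
        = (if i = nat a \<and> 0 \<le> a then coeff p i * coeff q (n - i) else 0)"
      using p q by (auto simp: vanishes_below_def)
  qed
  also have "\<dots> = coeff_int p a * coeff_int q b"
    using False by (auto simp: coeff_int_def n_def nat_diff_distrib nat_add_distrib)
  finally show ?thesis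
    using False by (simp add: coeff_int_def n_def)
qed

lemma lowest_coeff_prod:
  fixes f :: "'i \<Rightarrow> 'a::comm_semiring_1 poly"
  assumes "finite I" and "\<And>i. i \<in> I \<Longrightarrow> vanishes_below (f i) (w i)"
  shows "vanishes_below (prod f I) (sum w I)
    \<and> coeff_int (prod f I) (sum w I) = (\<Prod>i\<in>I. coeff_int (f i) (w i))"
  using assms
proof (induction I rule: finite_induct)
  case empty
  then show ?case by (simp add: vanishes_below_def coeff_int_def)
next
  case (insert i I)
  then show ?case
    by (simp add: vanishes_below_mult coeff_int_mult_lowest)
qed

lemma lowest_coeff_det:
  fixes A :: "'a::comm_ring_1 poly mat" and \<alpha> \<beta> :: "nat \<Rightarrow> int"
  assumes A: "A \<in> carrier_mat n n"
    and low: "\<And>i j. i < n \<Longrightarrow> j < n \<Longrightarrow> vanishes_below (A $$ (i, j)) (\<alpha> i + \<beta> j)"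
  shows "vanishes_below (det A) (\<Sum>i<n. \<alpha> i + \<beta> i)"
    and "coeff_int (det A) (\<Sum>i<n. \<alpha> i + \<beta> i)
      = det (mat n n (\<lambda>(i, j). coeff_int (A $$ (i, j)) (\<alpha> i + \<beta> j)))"
proof -
  define P where "P = {\<sigma>. \<sigma> permutes {0..<n}}"
  define w where "w = (\<Sum>i<n. \<alpha> i + \<beta> i)"
  have summand: "vanishes_below (\<Prod>i = 0..<n. A $$ (i, \<sigma> i)) w
      \<and> coeff_int (\<Prod>i = 0..<n. A $$ (i, \<sigma> i)) w
        = (\<Prod>i = 0..<n. coeff_int (A $$ (i, \<sigma> i)) (\<alpha> i + \<beta> (\<sigma> i)))"
    if "\<sigma> \<in> P" for \<sigma>
  proof -
    have \<sigma>: "\<sigma> permutes {0..<n}" using that by (simp add: P_def)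
    have "(\<Sum>i = 0..<n. \<alpha> i + \<beta> (\<sigma> i)) = w"
      using sum.permute[OF \<sigma>, of \<beta>]
      by (simp add: w_def sum.distrib atLeast0LessThan comp_def)
    with lowest_coeff_prod[of "{0..<n}" "\<lambda>i. A $$ (i, \<sigma> i)" "\<lambda>i. \<alpha> i + \<beta> (\<sigma> i)"]
    show ?thesis using low permutes_in_image[OF \<sigma>] by auto
  qed
  have coeff_signof: "coeff (signof \<sigma> * p) k = signof \<sigma> * coeff p k" for \<sigma> p k
    by (cases \<sigma> rule: sign_cases) auto
  show "vanishes_below (det A) w"
    using summand
    by (auto simp: det_def'[OF A] vanishes_below_def coeff_sum coeff_signof P_def intro!: sum.neutral)
  have "coeff_int (det A) w = (\<Sum>\<sigma>\<in>P. signof \<sigma> * coeff_int (\<Prod>i = 0..<n. A $$ (i, \<sigma> i)) w)"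
    by (simp add: det_def'[OF A] P_def coeff_int_def coeff_sum coeff_signof sum_distrib_left)
  also have "\<dots> = det (mat n n (\<lambda>(i, j). coeff_int (A $$ (i, j)) (\<alpha> i + \<beta> j)))"
    using summand
    by (auto simp: det_def'[of _ n] P_def permutes_in_image intro!: sum.cong prod.cong)
  finally show "coeff_int (det A) w = \<dots>" .
qed

lemma det_subtract_previous_column:
  fixes A B :: "'a::comm_ring_1 mat"
  assumes A: "A \<in> carrier_mat n n" and B: "B \<in> carrier_mat n n"
    and col0: "\<And>i. i < n \<Longrightarrow> B $$ (i, 0) = A $$ (i, 0)"
    and colj: "\<And>i j. i < n \<Longrightarrow> 0 < j \<Longrightarrow> j < n \<Longrightarrow> B $$ (i, j) = A $$ (i, j) - c * A $$ (i, j - 1)"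
  shows "det A = det B"
proof -
  define U where "U = mat n n (\<lambda>(k, j). if k \<le> j then c ^ (j - k) else 0)"
  have U: "U \<in> carrier_mat n n" by (simp add: U_def)
  have telescope: "(\<Sum>k = 0..j. B $$ (i, k) * c ^ (j - k)) = A $$ (i, j)" if "i < n" "j < n" for i j
    using \<open>j < n\<close>
  proof (induction j)
    case 0
    then show ?case using col0[OF \<open>i < n\<close>] by simp
  next
    case (Suc j)
    have "(\<Sum>k = 0..Suc j. B $$ (i, k) * c ^ (Suc j - k))
        = B $$ (i, Suc j) + c * (\<Sum>k = 0..j. B $$ (i, k) * c ^ (j - k))"
      by (simp add: sum_distrib_left Suc_diff_le mult.left_commute)
    then show ?case
      using Suc colj[OF \<open>i < n\<close>, of "Suc j"] by simp
  qed
  have "A = B * U"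
  proof (rule eq_matI)
    fix i j assume "i < dim_row (B * U)" and "j < dim_col (B * U)"
    then have i: "i < n" and j: "j < n" using B U by auto
    have "(B * U) $$ (i, j) = (\<Sum>k = 0..<n. B $$ (i, k) * U $$ (k, j))"
      using i j B U by (simp add: scalar_prod_def)
    also have "\<dots> = (\<Sum>k = 0..j. B $$ (i, k) * c ^ (j - k))"
      using j by (intro sum.mono_neutral_cong_right) (auto simp: U_def)
    finally show "A $$ (i, j) = (B * U) $$ (i, j)"
      using telescope[OF i j] by simp
  qed (use A B U in auto)
  moreover have "det U = 1"
    using U
    by (subst det_upper_triangular) (auto simp: U_def upper_triangular_def prod_list_diag_prod)
  ultimately show ?thesis
    using det_mult[OF B U] by simp
qed

lemma det_expand_first_column:
  fixes A :: "'a::comm_ring_1 mat"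
  assumes A: "A \<in> carrier_mat n n" and "0 < n"
    and zero: "\<And>i. 0 < i \<Longrightarrow> i < n \<Longrightarrow> A $$ (i, 0) = 0"
  shows "det A = A $$ (0, 0) * det (mat_delete A 0 0)"
proof -
  have "det A = (\<Sum>i<n. A $$ (i, 0) * cofactor A i 0)"
    by (rule laplace_expansion_column[OF A \<open>0 < n\<close>])
  also have "\<dots> = A $$ (0, 0) * cofactor A 0 0"
    using \<open>0 < n\<close> zero by (subst sum.remove[of _ 0]) (auto intro!: sum.neutral)
  finally show ?thesis by (simp add: cofactor_def)
qed

lemma det_scale_rows:
  fixes d :: "nat \<Rightarrow> 'a::comm_ring_1"
  shows "det (mat n n (\<lambda>(i, j). d i * A i j)) = (\<Prod>i<n. d i) * det (mat n n (\<lambda>(i, j). A i j))"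
  unfolding det_def'[OF mat_carrier] sum_distrib_left
proof (intro sum.cong refl)
  fix p assume "p \<in> {p. p permutes {0..<n}}"
  then have "p i < n" if "i < n" for i
    using permutes_in_image that by fastforce
  then show "signof p * (\<Prod>i = 0..<n. mat n n (\<lambda>(i, j). d i * A i j) $$ (i, p i))
      = (\<Prod>i<n. d i) * (signof p * (\<Prod>i = 0..<n. mat n n (\<lambda>(i, j). A i j) $$ (i, p i)))"
    by (simp add: prod.distrib atLeast0LessThan)
qed

lemma det_permute_rows_cols:
  fixes A :: "'a::comm_ring_1 mat"
  assumes A: "A \<in> carrier_mat n n" and p: "p permutes {0..<n}"
  shows "det (mat n n (\<lambda>(i, j). A $$ (p i, p j))) = det A"
proof -
  define B where "B = mat n n (\<lambda>(i, j). A $$ (p i, j))"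
  have B: "B \<in> carrier_mat n n" by (simp add: B_def)
  have "mat n n (\<lambda>(i, j). A $$ (p i, p j))
      = transpose_mat (mat n n (\<lambda>(i, j). transpose_mat B $$ (p i, j)))"
    using permutes_in_image[OF p] by (intro eq_matI) (auto simp: B_def)
  then have "det (mat n n (\<lambda>(i, j). A $$ (p i, p j)))
      = det (mat n n (\<lambda>(i, j). transpose_mat B $$ (p i, j)))"
    by (simp add: det_transpose[OF mat_carrier])
  also have "\<dots> = signof p * det (transpose_mat B)"
    by (rule det_permute_rows[OF _ p]) (use B in simp)
  also have "\<dots> = signof p * signof p * det A"
    unfolding det_transpose[OF B] by (simp add: B_def det_permute_rows[OF A p])
  also have "signof p * signof p = (1::'a)"
    by (cases p rule: sign_cases) auto
  finally show ?thesis by simp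
qed

lemma det_vandermonde:
  fixes y :: "nat \<Rightarrow> 'a::comm_ring_1"
  shows "det (mat n n (\<lambda>(i, j). y i ^ j)) = (\<Prod>i<n. \<Prod>j = Suc i..<n. y j - y i)"
proof (induction n arbitrary: y)
  case (Suc n)
  define V where
    "V = mat (Suc n) (Suc n) (\<lambda>(i, j). if j = 0 then 1 else y i ^ (j - 1) * (y i - y 0))"
  have V: "V \<in> carrier_mat (Suc n) (Suc n)" by (simp add: V_def)
  have "det (mat (Suc n) (Suc n) (\<lambda>(i, j). y i ^ j)) = det V"
    by (rule det_subtract_previous_column[where c = "y 0"])
      (auto simp: V_def algebra_simps power_eq_if)
  also have "\<dots> = (\<Sum>j<Suc n. V $$ (0, j) * cofactor V 0 j)"
    by (rule laplace_expansion_row[OF V]) simp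
  also have "\<dots> = det (mat_delete V 0 0)"
    by (subst sum.lessThan_Suc_shift) (simp add: V_def cofactor_def)
  also have "mat_delete V 0 0 = mat n n (\<lambda>(i, j). (y (Suc i) - y 0) * y (Suc i) ^ j)"
    by (rule eq_matI) (auto simp: mat_delete_def V_def algebra_simps)
  also have "det \<dots> = (\<Prod>i<n. y (Suc i) - y 0) * (\<Prod>i<n. \<Prod>j = Suc i..<n. y (Suc j) - y (Suc i))"
    by (simp add: det_scale_rows Suc.IH)
  also have "\<dots> = (\<Prod>i<Suc n. \<Prod>j = Suc i..<Suc n. y j - y i)"
    by (subst prod.lessThan_Suc_shift) (simp only: prod.shift_bounds_Suc_ivl atLeast0LessThan)
  finally show ?case .
qed simp

lemma det_monic_poly_columns:
  fixes p :: "nat \<Rightarrow> 'a::comm_ring_1 poly"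
  assumes deg: "\<And>j. j < n \<Longrightarrow> degree (p j) \<le> j" and monic: "\<And>j. j < n \<Longrightarrow> coeff (p j) j = 1"
  shows "det (mat n n (\<lambda>(i, j). poly (p j) (y i))) = det (mat n n (\<lambda>(i, j). y i ^ j))"
proof -
  define V where "V = mat n n (\<lambda>(i, j). y i ^ j)"
  define T where "T = mat n n (\<lambda>(k, j). coeff (p j) k)"
  have V: "V \<in> carrier_mat n n" and T: "T \<in> carrier_mat n n" by (auto simp: V_def T_def)
  have "mat n n (\<lambda>(i, j). poly (p j) (y i)) = V * T"
  proof (rule eq_matI)
    fix i j assume "i < dim_row (V * T)" "j < dim_col (V * T)"
    then have i: "i < n" and j: "j < n" by (auto simp: V_def T_def)
    have "(V * T) $$ (i, j) = (\<Sum>k = 0..<n. y i ^ k * coeff (p j) k)"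
      using i j by (simp add: V_def T_def scalar_prod_def)
    also have "\<dots> = (\<Sum>k\<le>degree (p j). coeff (p j) k * y i ^ k)"
      using deg[OF j] j by (intro sum.mono_neutral_cong_right) (auto simp: coeff_eq_0)
    finally show "mat n n (\<lambda>(i, j). poly (p j) (y i)) $$ (i, j) = (V * T) $$ (i, j)"
      using i j by (simp add: poly_altdef)
  qed (auto simp: V_def T_def)
  moreover have "det T = 1"
    using T deg by (subst det_upper_triangular)
      (auto simp: T_def upper_triangular_def prod_list_diag_prod monic
        intro!: coeff_eq_0 le_less_trans[OF deg])
  ultimately show ?thesis
    using det_mult[OF V T] by (simp add: V_def)
qed

section \<open>The lowest coefficient along [x1] - [x2]\<close>

lemma partition_nth_pos: "is_partition lam \<Longrightarrow> i < length lam \<Longrightarrow> 0 < lam ! i"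
  unfolding is_partition_def by simp

lemma partition_nth_antimono: "is_partition lam \<Longrightarrow> i \<le> j \<Longrightarrow> j < length lam \<Longrightarrow> lam ! j \<le> lam ! i"
  unfolding is_partition_def by (metis le_eq_less_or_eq order.refl sorted_wrt_nth_less)

lemma int_Nprime:
  assumes "is_partition lam"
  shows "int (Nprime lam) = (\<Sum>i = 1..<length lam. int (lam ! i) - 1)"
proof -
  have "length lam - 1 \<le> (\<Sum>i = 1..<length lam. lam ! i)"
    using sum_mono[of "{1..<length lam}" "\<lambda>_. 1::nat" "\<lambda>i. lam ! i"]
      partition_nth_pos[OF assms] by (simp add: Suc_le_eq)
  then show ?thesis
    by (simp add: Nprime_def of_nat_diff sum_subtractf of_nat_sum)
qed

definition inv_fact :: "int \<Rightarrow> real" where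
  "inv_fact z = (if z < 0 then 0 else 1 / fact (nat z))"

definition inv_fact_mat :: "nat list \<Rightarrow> real mat" where
  "inv_fact_mat lam = mat (length lam - 1) (length lam - 1)
     (\<lambda>(i, j). inv_fact (int (lam ! Suc i) - 1 - int i + int j))"

text \<open>The coefficients of (1 - x1 k) (1 - x2 k) / (1 - x1 k) = 1 - x2 k.\<close>

lemma pint_brk_recurrence:
  "pint (brk x1 x2) n - x1 * pint (brk x1 x2) (n - 1) = pint (brk 0 x2) n"
proof -
  have "n < 0 \<or> n = 0 \<or> n = 1 \<or> n = int (nat (n - 2)) + 2" by auto
  then consider "n < 0" | "n = 0" | "n = 1" | m where "n = int m + 2" by blast
  then show ?thesis
  proof cases
    case (4 m)
    then show ?thesis by (simp add: pint_def pfun_brk nat_add_distrib)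
  qed (simp_all add: pint_def pfun_brk)
qed

lemma pint_poly_brk_recurrence:
  "pint_poly (brk x1 x2) n - [:x1:] * pint_poly (brk x1 x2) (n - 1) = pint_poly (brk 0 x2) n"
proof (rule poly_eqI)
  fix k
  show "coeff (pint_poly (brk x1 x2) n - [:x1:] * pint_poly (brk x1 x2) (n - 1)) k
      = coeff (pint_poly (brk 0 x2) n) k"
    using pint_brk_recurrence[of x1 x2 "n - int k"]
    by (simp add: coeff_pint_poly diff_divide_distrib[symmetric] algebra_simps)
qed

lemma schur_poly_brk_reduced:
  "schur_poly (brk x1 x2) lam = det (mat (length lam) (length lam) (\<lambda>(i, j).
      if j = 0 then pint_poly (brk x1 x2) (int (lam ! i) - int i)
      else pint_poly (brk 0 x2) (int (lam ! i) - int i + int j)))"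
  (is "_ = det ?B")
proof -
  let ?A = "mat (length lam) (length lam)
    (\<lambda>(i, j). pint_poly (brk x1 x2) (int (lam ! i) - int i + int j))"
  have entries: "?B $$ (i, j) = ?A $$ (i, j) - [:x1:] * ?A $$ (i, j - 1)"
    if "i < length lam" "0 < j" "j < length lam" for i j
    using that pint_poly_brk_recurrence[of x1 x2 "int (lam ! i) - int i + int j"]
    by (simp add: of_nat_diff algebra_simps)
  show ?thesis
    unfolding schur_poly_def
    by (rule det_subtract_previous_column[OF _ _ _ entries]) (auto simp del: length_greater_0_conv)
qed

lemma pint_brk_0: "pint (brk 0 x2) n = (if n = 0 then 1 else if n = 1 then - x2 else 0)"
  by (auto simp: pint_def pfun_brk nat_eq_iff)

lemma vanishes_below_pint_poly_brk_0: "vanishes_below (pint_poly (brk 0 x2) n) (n - 1)"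
  by (auto simp: vanishes_below_def coeff_pint_poly pint_brk_0)

lemma coeff_int_pint_poly_brk_0:
  "coeff_int (pint_poly (brk 0 x2) n) (n - 1) = - x2 * inv_fact (n - 1)"
  by (auto simp: coeff_int_def coeff_pint_poly pint_brk_0 inv_fact_def)

definition lowest_coeff_mat :: "real \<Rightarrow> real \<Rightarrow> nat list \<Rightarrow> real mat" where
  "lowest_coeff_mat x1 x2 lam = mat (length lam) (length lam) (\<lambda>(i, j).
     if j = 0 then (if i = 0 then pfun (brk x1 x2) (lam ! 0) else 0)
     else - x2 * inv_fact (int (lam ! i) - int i + int j - 1))"

lemma schur_poly_brk_lowest:
  assumes lam: "is_partition lam" and "lam \<noteq> []"
  shows "vanishes_below (schur_poly (brk x1 x2) lam) (Nprime lam)"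
    and "coeff (schur_poly (brk x1 x2) lam) (Nprime lam) = det (lowest_coeff_mat x1 x2 lam)"
proof -
  define l where "l = length lam"
  have "0 < l" using \<open>lam \<noteq> []\<close> by (simp add: l_def)
  define M where "M = mat l l (\<lambda>(i, j).
      if j = 0 then pint_poly (brk x1 x2) (int (lam ! i) - int i)
      else pint_poly (brk 0 x2) (int (lam ! i) - int i + int j))"
  have M: "M \<in> carrier_mat l l" by (simp add: M_def)
  have schur_M: "schur_poly (brk x1 x2) lam = det M"
    unfolding schur_poly_brk_reduced M_def l_def ..
  txt \<open>Column 0 gets the weight 1 - lambda_1: all its entries trivially vanish below it,
    and only the top one can attain it because lambda is decreasing.\<close>
  define \<alpha> where "\<alpha> i = int (lam ! i) - int i - 1" for i
  define \<beta> where "\<beta> j = (if j = 0 then 1 - int (lam ! 0) else int j)" for j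
  have weight_col0: "\<alpha> i + \<beta> 0 \<le> 0" and weight_col0_neg: "0 < i \<Longrightarrow> \<alpha> i + \<beta> 0 < 0"
    if "i < l" for i
    using partition_nth_antimono[OF lam, of 0 i] that by (auto simp: \<alpha>_def \<beta>_def l_def)
  have low: "vanishes_below (M $$ (i, j)) (\<alpha> i + \<beta> j)" if "i < l" "j < l" for i j
    using that weight_col0[of i] vanishes_below_pint_poly_brk_0
    by (auto simp: M_def vanishes_below_def \<alpha>_def \<beta>_def)
  have "(\<Sum>i<l. \<alpha> i + \<beta> i) = (\<Sum>i = 1..<l. int (lam ! i) - 1)"
    using \<open>0 < l\<close> by (simp add: lessThan_atLeast0 sum.atLeast_Suc_lessThan \<alpha>_def \<beta>_def)
  then have weight_sum: "(\<Sum>i<l. \<alpha> i + \<beta> i) = int (Nprime lam)"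
    by (simp add: int_Nprime[OF lam] l_def)
  show "vanishes_below (schur_poly (brk x1 x2) lam) (Nprime lam)"
    using lowest_coeff_det(1)[OF M low] by (simp add: schur_M weight_sum)
  have "mat l l (\<lambda>(i, j). coeff_int (M $$ (i, j)) (\<alpha> i + \<beta> j)) = lowest_coeff_mat x1 x2 lam"
  proof (rule eq_matI)
    fix i j assume "i < dim_row (lowest_coeff_mat x1 x2 lam)" and "j < dim_col (lowest_coeff_mat x1 x2 lam)"
    then have "i < l" "j < l" by (auto simp: lowest_coeff_mat_def l_def)
    then show "mat l l (\<lambda>(i, j). coeff_int (M $$ (i, j)) (\<alpha> i + \<beta> j)) $$ (i, j)
        = lowest_coeff_mat x1 x2 lam $$ (i, j)"
      using weight_col0_neg[of i] coeff_int_pint_poly_brk_0[of x2 "int (lam ! i) - int i + int j"]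
      by (auto simp: M_def lowest_coeff_mat_def l_def \<alpha>_def \<beta>_def coeff_int_def coeff_pint_poly
          pint_def algebra_simps)
  qed (auto simp: lowest_coeff_mat_def l_def)
  then show "coeff (schur_poly (brk x1 x2) lam) (Nprime lam) = det (lowest_coeff_mat x1 x2 lam)"
    using lowest_coeff_det(2)[OF M low] by (simp add: schur_M weight_sum coeff_int_def)
qed

lemma det_lowest_coeff_mat:
  assumes "lam \<noteq> []"
  shows "det (lowest_coeff_mat x1 x2 lam)
    = pfun (brk x1 x2) (lam ! 0) * (- x2) ^ (length lam - 1) * det (inv_fact_mat lam)"
proof -
  define C where "C = lowest_coeff_mat x1 x2 lam"
  have C: "C \<in> carrier_mat (length lam) (length lam)" by (simp add: C_def lowest_coeff_mat_def)
  have "mat_delete C 0 0 = (- x2) \<cdot>\<^sub>m inv_fact_mat lam"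
    by (rule eq_matI) (auto simp: mat_delete_def C_def lowest_coeff_mat_def inv_fact_mat_def algebra_simps)
  with det_expand_first_column[OF C] assms show ?thesis
    by (simp add: C_def lowest_coeff_mat_def inv_fact_mat_def)
qed

section \<open>The inverse factorial determinant\<close>

definition falling_poly :: "nat \<Rightarrow> real poly" where
  "falling_poly j = (\<Prod>k<j. [:- real k, 1:])"

lemma degree_falling_poly: "degree (falling_poly j) = j"
  by (simp add: falling_poly_def degree_prod_sum_eq)

lemma lead_coeff_falling_poly: "coeff (falling_poly j) j = 1"
  using lead_coeff_prod[of "\<lambda>k. [:- real k, 1:]" "{..<j}"]
  by (simp add: degree_falling_poly[unfolded falling_poly_def] falling_poly_def)

lemma inv_fact_diff: "inv_fact (int y - int j) = poly (falling_poly j) (real y) / fact y"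
proof (cases "j \<le> y")
  case True
  have "(\<Prod>k<j. real y - real k) * fact (y - j) = fact y"
    using True
  proof (induction j)
    case (Suc j)
    then have "y - j = Suc (y - Suc j)" by simp
    with Suc show ?case by (simp add: of_nat_diff algebra_simps)
  qed simp
  then show ?thesis
    using True by (simp add: inv_fact_def falling_poly_def poly_prod field_simps nat_diff_distrib)
next
  case False
  then have "poly (falling_poly j) (real y) = 0"
    by (auto simp: falling_poly_def poly_prod intro!: bexI[of _ y])
  with False show ?thesis by (simp add: inv_fact_def)
qed

lemma det_inv_fact_vandermonde:
  fixes y :: "nat \<Rightarrow> nat"
  shows "det (mat n n (\<lambda>(i, j). inv_fact (int (y i) - int j)))
    = (\<Prod>i<n. 1 / fact (y i)) * (\<Prod>i<n. \<Prod>j = Suc i..<n. real (y j) - real (y i))"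
proof -
  have "det (mat n n (\<lambda>(i, j). inv_fact (int (y i) - int j)))
      = det (mat n n (\<lambda>(i, j). 1 / fact (y i) * poly (falling_poly j) (real (y i))))"
    by (intro arg_cong[where f = det] eq_matI) (auto simp: inv_fact_diff)
  also have "\<dots> = (\<Prod>i<n. 1 / fact (y i))
      * det (mat n n (\<lambda>(i, j). poly (falling_poly j) (real (y i))))"
    by (rule det_scale_rows)
  also have "det (mat n n (\<lambda>(i, j). poly (falling_poly j) (real (y i))))
      = det (mat n n (\<lambda>(i, j). real (y i) ^ j))"
    by (rule det_monic_poly_columns) (simp_all add: degree_falling_poly lead_coeff_falling_poly)
  finally show ?thesis
    by (simp add: det_vandermonde)
qed

lemma det_inv_fact_mat_reversed:
  assumes lam: "is_partition lam" and "lam \<noteq> []"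
  shows "det (inv_fact_mat lam)
    = det (mat (length lam - 1) (length lam - 1)
        (\<lambda>(i, j). inv_fact (int (wt lam (Suc i) - 1) - int j)))"
proof -
  define n where "n = length lam - 1"
  define r where "r i = (if i < n then n - 1 - i else i)" for i
  have r: "r permutes {0..<n}"
    by (rule inj_imp_permutes) (auto simp: r_def inj_on_def)
  have "det (inv_fact_mat lam) = det (mat n n (\<lambda>(i, j). inv_fact_mat lam $$ (r i, r j)))"
    by (rule det_permute_rows_cols[OF _ r, symmetric]) (simp add: inv_fact_mat_def n_def)
  also have "mat n n (\<lambda>(i, j). inv_fact_mat lam $$ (r i, r j))
      = mat n n (\<lambda>(i, j). inv_fact (int (wt lam (Suc i) - 1) - int j))"
  proof (intro eq_matI)
    fix i j assume "i < dim_row (mat n n (\<lambda>(i, j). inv_fact (int (wt lam (Suc i) - 1) - int j)))"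
      and "j < dim_col (mat n n (\<lambda>(i, j). inv_fact (int (wt lam (Suc i) - 1) - int j)))"
    then have "i < n" "j < n" by auto
    moreover have "0 < lam ! (n - i)"
      using partition_nth_pos[OF lam] \<open>i < n\<close> by (simp add: n_def)
    moreover have "Suc (n - Suc i) = n - i" "length lam - Suc i = n - i"
      using \<open>i < n\<close> by (auto simp: n_def)
    ultimately show "mat n n (\<lambda>(i, j). inv_fact_mat lam $$ (r i, r j)) $$ (i, j)
        = mat n n (\<lambda>(i, j). inv_fact (int (wt lam (Suc i) - 1) - int j)) $$ (i, j)"
      by (simp add: inv_fact_mat_def wt_def r_def n_def[symmetric] of_nat_diff algebra_simps)
  qed auto
  finally show ?thesis by (simp add: n_def)
qed

lemma fact_Nprime_mult_det_inv_fact_mat: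
  assumes lam: "is_partition lam" and "lam \<noteq> []"
  shows "fact (Nprime lam) * det (inv_fact_mat lam) = clam lam"
proof -
  define n where "n = length lam - 1"
  define y where "y i = wt lam (Suc i) - 1" for i
  have real_y: "real (y i) = real (wt lam (Suc i)) - 1" if "i < n" for i
  proof -
    have "0 < lam ! (n - i)" and "length lam - Suc i = n - i"
      using partition_nth_pos[OF lam, of "n - i"] that by (auto simp: n_def)
    then show ?thesis by (simp add: y_def wt_def of_nat_diff)
  qed
  have shift: "(\<Prod>j\<in>{Suc i<..n}. f j) = (\<Prod>j = Suc i..<n. f (Suc j))" for i and f :: "nat \<Rightarrow> real"
    by (simp add: atLeastSucAtMost_greaterThanAtMost[symmetric] prod.shift_bounds_Suc_ivl[symmetric]
        atLeastLessThanSuc_atLeastAtMost)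
  have fact_prod: "(\<Prod>i\<in>{1..n}. fact (wt lam i - 1)) = (\<Prod>i<n. (fact (y i) :: real))"
    by (simp add: prod.atLeast1_atMost_eq y_def)
  have "(\<Prod>i\<in>{1..n}. \<Prod>j\<in>{i<..n}. real (wt lam j) - real (wt lam i))
      = (\<Prod>i<n. \<Prod>j = Suc i..<n. real (wt lam (Suc j)) - real (wt lam (Suc i)))"
    by (simp add: prod.atLeast1_atMost_eq shift)
  also have "\<dots> = (\<Prod>i<n. \<Prod>j = Suc i..<n. real (y j) - real (y i))"
    by (intro prod.cong refl) (simp add: real_y)
  finally have diff_prod: "(\<Prod>i\<in>{1..n}. \<Prod>j\<in>{i<..n}. real (wt lam j) - real (wt lam i))
      = (\<Prod>i<n. \<Prod>j = Suc i..<n. real (y j) - real (y i))" .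
  have "det (inv_fact_mat lam)
      = (\<Prod>i<n. 1 / fact (y i)) * (\<Prod>i<n. \<Prod>j = Suc i..<n. real (y j) - real (y i))"
    unfolding det_inv_fact_mat_reversed[OF assms] det_inv_fact_vandermonde[symmetric]
    by (simp add: y_def n_def)
  then show ?thesis
    unfolding clam_def n_def[symmetric] fact_prod diff_prod by (simp add: prod_dividef)
qed

section \<open>Extension by parts equal to one\<close>

definition ones_extension :: "nat list \<Rightarrow> nat list \<Rightarrow> bool" where
  "ones_extension lam mu \<longleftrightarrow> length lam \<le> length mu
     \<and> (\<forall>i. 1 \<le> i \<and> i < length lam \<longrightarrow> mu ! i = lam ! i)
     \<and> (\<forall>i. length lam \<le> i \<and> i < length mu \<longrightarrow> mu ! i = 1)"

lemma ones_extension_refl: "ones_extension lam lam"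
  by (simp add: ones_extension_def)

lemma ones_extension_hook: "1 \<le> r \<Longrightarrow> ones_extension [m] (hook m r)"
  by (auto simp: ones_extension_def hook_def nth_Cons')

lemma is_partition_hook: "0 < m \<Longrightarrow> is_partition (hook m r)"
  by (auto simp: is_partition_def hook_def sorted_wrt_iff_nth_less nth_Cons')

lemma Nprime_ones_extension:
  assumes "is_partition lam" "is_partition mu" "lam \<noteq> []" "ones_extension lam mu"
  shows "Nprime mu = Nprime lam"
proof -
  have "1 \<le> length lam" using assms(3) by (simp add: Suc_le_eq)
  have split: "{1..<length mu} = {1..<length lam} \<union> {length lam..<length mu}"
    using assms(4) \<open>1 \<le> length lam\<close> by (auto simp: ones_extension_def)
  have "int (Nprime mu) = (\<Sum>i = 1..<length lam. int (mu ! i) - 1)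
      + (\<Sum>i = length lam..<length mu. int (mu ! i) - 1)"
    unfolding int_Nprime[OF assms(2)] split by (rule sum.union_disjoint) auto
  also have "\<dots> = int (Nprime lam)"
    using assms(4) by (simp add: int_Nprime[OF assms(1)] ones_extension_def)
  finally show ?thesis by simp
qed

lemma det_inv_fact_mat_ones_extension:
  assumes "lam \<noteq> []" and ext: "ones_extension lam mu"
  shows "det (inv_fact_mat mu) = det (inv_fact_mat lam)"
proof -
  have "1 \<le> length lam" using assms(1) by (simp add: Suc_le_eq)
  define n where "n = length lam - 1"
  define k where "k = length mu - length lam"
  have len_mu: "length mu - 1 = n + k"
    using assms by (auto simp: n_def k_def ones_extension_def Suc_le_eq)
  define U where "U = mat k k (\<lambda>(i, j). inv_fact (int j - int i))"
  define B where "B = mat n k (\<lambda>(i, j). inv_fact_mat mu $$ (i, n + j))"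
  have G: "inv_fact_mat lam \<in> carrier_mat n n" by (simp add: inv_fact_mat_def n_def)
  have "inv_fact_mat mu = four_block_mat (inv_fact_mat lam) B (0\<^sub>m k n) U"
  proof (rule eq_matI)
    fix i j assume "i < dim_row (four_block_mat (inv_fact_mat lam) B (0\<^sub>m k n) U)"
      and "j < dim_col (four_block_mat (inv_fact_mat lam) B (0\<^sub>m k n) U)"
    then have i: "i < n + k" and j: "j < n + k" by (auto simp: n_def U_def B_def inv_fact_mat_def)
    have "mu ! Suc i = (if i < n then lam ! Suc i else 1)"
      using ext i \<open>1 \<le> length lam\<close> unfolding ones_extension_def n_def k_def
      by (cases "i < n") (auto simp: n_def dest!: spec[of _ "Suc i"])
    then show "inv_fact_mat mu $$ (i, j)
        = four_block_mat (inv_fact_mat lam) B (0\<^sub>m k n) U $$ (i, j)"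
      using i j len_mu by (auto simp: inv_fact_mat_def B_def U_def inv_fact_def n_def)
  qed (use len_mu in \<open>auto simp: inv_fact_mat_def n_def U_def B_def\<close>)
  moreover have "det (four_block_mat (inv_fact_mat lam) B (0\<^sub>m k n) U)
      = det (inv_fact_mat lam) * det U"
    by (rule det_four_block_mat_lower_left_zero[OF G _ refl]) (simp_all add: B_def U_def)
  moreover have "det U = 1"
    by (subst det_upper_triangular[of _ k])
      (auto simp: U_def upper_triangular_def inv_fact_def prod_list_diag_prod)
  ultimately show ?thesis by simp
qed

lemma schur_hook_brk:
  assumes "0 < m" and "1 \<le> r"
  shows "schur (hook m r) (brk x1 x2) = pfun (brk x1 x2) m * (- x2) ^ (r - 1)"
proof -
  have ext: "ones_extension [m] (hook m r)"
    using \<open>1 \<le> r\<close> by (rule ones_extension_hook)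
  have part: "is_partition [m]" "is_partition (hook m r)"
    using \<open>0 < m\<close> is_partition_hook by (auto simp: is_partition_def)
  have "Nprime (hook m r) = 0"
    using Nprime_ones_extension[OF part _ ext] by (simp add: Nprime_def)
  moreover have "det (inv_fact_mat (hook m r)) = 1"
    using det_inv_fact_mat_ones_extension[OF _ ext] by (simp add: inv_fact_mat_def)
  ultimately show ?thesis
    using schur_poly_brk_lowest(2)[OF part(2), of x1 x2] det_lowest_coeff_mat[of "hook m r"] \<open>1 \<le> r\<close>
    by (simp add: schur_eq_coeff_0 hook_def)
qed

lemma d1_Nprime_schur_brk:
  assumes lam: "is_partition lam" "lam \<noteq> []" and mu: "is_partition mu" "ones_extension lam mu"
  shows "d1 (Nprime lam) (schur mu) (brk x1 x2)
    = clam lam * schur (hook (mu ! 0) (length mu)) (brk x1 x2)"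
proof -
  have "mu \<noteq> []" using lam(2) mu(2) by (auto simp: ones_extension_def)
  then have "0 < mu ! 0" using partition_nth_pos[OF mu(1)] by simp
  have "d1 (Nprime lam) (schur mu) (brk x1 x2)
      = fact (Nprime lam)
        * (pfun (brk x1 x2) (mu ! 0) * (- x2) ^ (length mu - 1) * det (inv_fact_mat mu))"
    using schur_poly_brk_lowest(2)[OF mu(1) \<open>mu \<noteq> []\<close>] det_lowest_coeff_mat[OF \<open>mu \<noteq> []\<close>]
    by (simp add: d1_schur Nprime_ones_extension[OF lam(1) mu(1) lam(2) mu(2)])
  also have "\<dots> = clam lam * (pfun (brk x1 x2) (mu ! 0) * (- x2) ^ (length mu - 1))"
    using fact_Nprime_mult_det_inv_fact_mat[OF lam] det_inv_fact_mat_ones_extension[OF lam(2) mu(2)]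
    by (simp add: algebra_simps)
  also have "\<dots> = clam lam * schur (hook (mu ! 0) (length mu)) (brk x1 x2)"
    using \<open>0 < mu ! 0\<close> \<open>mu \<noteq> []\<close> by (simp add: schur_hook_brk Suc_le_eq)
  finally show ?thesis .
qed

theorem theorem2p4:
  fixes lam :: "nat list"
  assumes "is_partition lam" and "length lam \<ge> 1"
  shows "(\<forall>m x1 x2. m < Nprime lam \<longrightarrow> d1 m (schur lam) (brk x1 x2) = 0)
    \<and> (\<forall>x1 x2. d1 (Nprime lam) (schur lam) (brk x1 x2)
          = clam lam * schur (hook (lam ! 0) (length lam)) (brk x1 x2))
    \<and> (\<forall>mu. is_partition mu \<and> length mu \<ge> length lam
          \<and> (\<forall>i. 1 \<le> i \<and> i < length lam \<longrightarrow> mu ! i = lam ! i)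
          \<and> (\<forall>i. length lam \<le> i \<and> i < length mu \<longrightarrow> mu ! i = 1)
          \<longrightarrow> (\<forall>x1 x2. d1 (Nprime lam) (schur mu) (brk x1 x2)
                = clam lam * schur (hook (mu ! 0) (length mu)) (brk x1 x2)))
    \<and> (\<forall>m r x1 x2. 1 \<le> m \<and> 1 \<le> r \<longrightarrow>
          schur (hook m r) (brk x1 x2) = (-1) ^ (r - 1) * x1 ^ (m - 1) * x2 ^ (r - 1) * (x1 - x2))"
proof (intro conjI allI impI)
  have lam: "is_partition lam" "lam \<noteq> []" using assms by auto
  fix x1 x2
  show "d1 m (schur lam) (brk x1 x2) = 0" if "m < Nprime lam" for m
    using schur_poly_brk_lowest(1)[OF lam] that by (simp add: d1_schur vanishes_below_def)
  show "d1 (Nprime lam) (schur lam) (brk x1 x2)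
      = clam lam * schur (hook (lam ! 0) (length lam)) (brk x1 x2)"
    using d1_Nprime_schur_brk[OF lam lam(1) ones_extension_refl] .
  fix mu
  assume "is_partition mu \<and> length mu \<ge> length lam
    \<and> (\<forall>i. 1 \<le> i \<and> i < length lam \<longrightarrow> mu ! i = lam ! i)
    \<and> (\<forall>i. length lam \<le> i \<and> i < length mu \<longrightarrow> mu ! i = 1)"
  then show "d1 (Nprime lam) (schur mu) (brk x1 x2)
      = clam lam * schur (hook (mu ! 0) (length mu)) (brk x1 x2)"
    using d1_Nprime_schur_brk[OF lam] by (simp add: ones_extension_def)
next
  fix m r :: nat and x1 x2 :: real
  assume "1 \<le> m \<and> 1 \<le> r"
  then show "schur (hook m r) (brk x1 x2)
      = (-1) ^ (r - 1) * x1 ^ (m - 1) * x2 ^ (r - 1) * (x1 - x2)"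
    by (simp add: schur_hook_brk pfun_brk power_minus[of x2] mult_ac)
qed

end
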